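(* In the subgroup setting described in the context: (1) for all integers $k,l\geq 0$, $R(k,l)\subseteq B_G(1_G,k+l)$; (2) for every integer $k\geq 0$, $B_G(1_G,k)\subseteq R(k,\Lambda(k))$, where $\Lambda(k)=\max_{g\in B_G(1_G,k)}\|g\|_H$.
   Context: $G$ is a finitely generated group and $H$ a finitely generated subgroup. $E_H$ is a finite generating set of $H$ closed under inverses and $D\supseteq E_H$ a finite generating set of $G$ closed under inverses; $d_H$, $d_G$ are the corresponding word metrics, $B_G(1_G,k)$ the closed ball of radius $k$ in $d_G$, $\|g\|_G=d_G(1_G,g)$. $F\subseteq G$ contains exactly one element of each left coset $gH$, chosen as an element of minimal $\|\cdot\|_G$ in that coset (with $1_G$ chosen for $H$); so every $g$ is uniquely $g=fh$, $f\in F$, $h\in H$, and $\|g\|_G\geq\|f\|_G$ for all $g\in fH$. Define $\pi(g)=f^{-1}g\in H$ for $g\in fH$, $\|g\|_H=d_H(1_G,\pi(g))$, and $\omega(g)=d_G(1_G,gH)=\|f\|_G$ for $g\in fH$. The rectangle of height $k$ and length $l$ is $R(k,l)=\{g\in G:\omega(g)\leq k,\ \|g\|_H\leq l\}$. *)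

theory Defs
  imports "HOL-Algebra.Algebra"
begin

definition word_length :: "('a, 'b) monoid_scheme \<Rightarrow> 'a set \<Rightarrow> 'a \<Rightarrow> nat" where
  "word_length G S g = (LEAST n. \<exists>ws. length ws = n \<and> set ws \<subseteq> S \<and> foldr (\<otimes>\<^bsub>G\<^esub>) ws \<one>\<^bsub>G\<^esub> = g)"

definition word_dist :: "('a, 'b) monoid_scheme \<Rightarrow> 'a set \<Rightarrow> 'a \<Rightarrow> 'a \<Rightarrow> nat" where
  "word_dist G S x y = word_length G S (inv\<^bsub>G\<^esub> x \<otimes>\<^bsub>G\<^esub> y)"

definition word_ball :: "('a, 'b) monoid_scheme \<Rightarrow> 'a set \<Rightarrow> nat \<Rightarrow> 'a set" where
  "word_ball G S k = {g \<in> carrier G. word_dist G S \<one>\<^bsub>G\<^esub> g \<le> k}"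

definition coset_rep :: "('a, 'b) monoid_scheme \<Rightarrow> 'a set \<Rightarrow> 'a set \<Rightarrow> 'a \<Rightarrow> 'a" where
  "coset_rep G H F g = (THE f. f \<in> F \<and> g \<in> f <#\<^bsub>G\<^esub> H)"

definition coset_proj :: "('a, 'b) monoid_scheme \<Rightarrow> 'a set \<Rightarrow> 'a set \<Rightarrow> 'a \<Rightarrow> 'a" where
  "coset_proj G H F g = inv\<^bsub>G\<^esub> (coset_rep G H F g) \<otimes>\<^bsub>G\<^esub> g"

definition normH :: "('a, 'b) monoid_scheme \<Rightarrow> 'a set \<Rightarrow> 'a set \<Rightarrow> 'a set \<Rightarrow> 'a \<Rightarrow> nat" where
  "normH G H F E g = word_dist G E \<one>\<^bsub>G\<^esub> (coset_proj G H F g)"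

definition height :: "('a, 'b) monoid_scheme \<Rightarrow> 'a set \<Rightarrow> 'a set \<Rightarrow> 'a \<Rightarrow> nat" where
  "height G H D g = (LEAST n. \<exists>x \<in> g <#\<^bsub>G\<^esub> H. word_dist G D \<one>\<^bsub>G\<^esub> x = n)"

definition rectangle :: "('a, 'b) monoid_scheme \<Rightarrow> 'a set \<Rightarrow> 'a set \<Rightarrow> 'a set \<Rightarrow> 'a set \<Rightarrow> nat \<Rightarrow> nat \<Rightarrow> 'a set" where
  "rectangle G H F D E k l =
     {g \<in> carrier G. height G H D g \<le> k \<and> normH G H F E g \<le> l}"

definition Lambda :: "('a, 'b) monoid_scheme \<Rightarrow> 'a set \<Rightarrow> 'a set \<Rightarrow> 'a set \<Rightarrow> 'a set \<Rightarrow> nat \<Rightarrow> nat" where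
  "Lambda G H F D E k = Max (normH G H F E ` word_ball G D k)"

end

theory Submission
  imports Defs
begin

(* Write g = f h with f the minimal representative of gH and h = pi(g) in H. Minimality
   gives |f|_G = omega(g), and E \<subseteq> D gives |h|_G \<le> |h|_H, so subadditivity of word
   length yields |g|_G \<le> omega(g) + ||g||_H. Conversely omega(g) \<le> |g|_G since g lies in
   its own coset, and ||g||_H \<le> Lambda(k) on the ball of radius k, which is finite because
   D is. *)

lemma (in group) foldr_mult_closed:
  "set ws \<subseteq> carrier G \<Longrightarrow> foldr (\<otimes>) ws \<one> \<in> carrier G"
  by (induction ws) auto

lemma (in group) foldr_mult_append:
  assumes "set ws \<subseteq> carrier G" "set vs \<subseteq> carrier G"
  shows "foldr (\<otimes>) (ws @ vs) \<one> = foldr (\<otimes>) ws \<one> \<otimes> foldr (\<otimes>) vs \<one>"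
  using assms(1)
proof (induction ws)
  case Nil
  then show ?case using foldr_mult_closed[OF assms(2)] by simp
next
  case (Cons a ws)
  then show ?case
    using foldr_mult_closed[of ws] foldr_mult_closed[OF assms(2)] by (simp add: m_assoc)
qed

lemma (in group) generate_imp_word:
  assumes "S \<subseteq> carrier G" "\<forall>s \<in> S. inv s \<in> S" "x \<in> generate G S"
  shows "\<exists>ws. set ws \<subseteq> S \<and> foldr (\<otimes>) ws \<one> = x"
  using assms(3)
proof (induction rule: generate.induct)
  case one
  show ?case by (intro exI[of _ "[]"]) auto
next
  case (incl h)
  then show ?case using assms(1) by (intro exI[of _ "[h]"]) auto
next
  case (inv h)
  then show ?case using assms by (intro exI[of _ "[inv h]"]) auto
next
  case (eng h1 h2)
  then obtain ws vs where "set ws \<subseteq> S" "foldr (\<otimes>) ws \<one> = h1"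
    and "set vs \<subseteq> S" "foldr (\<otimes>) vs \<one> = h2"
    by blast
  then show ?case using assms(1) foldr_mult_append[of ws vs]
    by (intro exI[of _ "ws @ vs"]) auto
qed

lemma word_length_attained:
  assumes "\<exists>ws. set ws \<subseteq> S \<and> foldr (\<otimes>\<^bsub>G\<^esub>) ws \<one>\<^bsub>G\<^esub> = x"
  shows "\<exists>ws. length ws = word_length G S x \<and> set ws \<subseteq> S \<and> foldr (\<otimes>\<^bsub>G\<^esub>) ws \<one>\<^bsub>G\<^esub> = x"
  unfolding word_length_def by (rule LeastI_ex) (use assms in blast)

lemma word_length_le:
  assumes "set ws \<subseteq> S" "foldr (\<otimes>\<^bsub>G\<^esub>) ws \<one>\<^bsub>G\<^esub> = x"
  shows "word_length G S x \<le> length ws"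
  unfolding word_length_def by (rule Least_le) (use assms in blast)

lemma (in group) word_length_mult_le:
  assumes "S \<subseteq> carrier G" "\<forall>s \<in> S. inv s \<in> S"
    and "x \<in> generate G S" "y \<in> generate G S"
  shows "word_length G S (x \<otimes> y) \<le> word_length G S x + word_length G S y"
proof -
  obtain ws where ws: "length ws = word_length G S x" "set ws \<subseteq> S" "foldr (\<otimes>) ws \<one> = x"
    using word_length_attained[OF generate_imp_word[OF assms(1,2,3)]] by blast
  obtain vs where vs: "length vs = word_length G S y" "set vs \<subseteq> S" "foldr (\<otimes>) vs \<one> = y"
    using word_length_attained[OF generate_imp_word[OF assms(1,2,4)]] by blast
  have "foldr (\<otimes>) (ws @ vs) \<one> = x \<otimes> y"
    using foldr_mult_append[of ws vs] ws vs assms(1) by auto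
  then have "word_length G S (x \<otimes> y) \<le> length (ws @ vs)"
    using ws vs by (intro word_length_le) auto
  then show ?thesis using ws vs by simp
qed

lemma (in group) word_length_antimono:
  assumes "S \<subseteq> T" "S \<subseteq> carrier G" "\<forall>s \<in> S. inv s \<in> S" "x \<in> generate G S"
  shows "word_length G T x \<le> word_length G S x"
proof -
  obtain ws where ws: "length ws = word_length G S x" "set ws \<subseteq> S" "foldr (\<otimes>) ws \<one> = x"
    using word_length_attained[OF generate_imp_word[OF assms(2-4)]] by blast
  then have "word_length G T x \<le> length ws" using assms(1) by (intro word_length_le) auto
  then show ?thesis using ws by simp
qed

lemma (in group) word_dist_one:
  "x \<in> carrier G \<Longrightarrow> word_dist G S \<one> x = word_length G S x"
  by (simp add: word_dist_def)

lemma (in group) finite_word_ball: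
  assumes "finite S" "S \<subseteq> carrier G" "\<forall>s \<in> S. inv s \<in> S" "generate G S = carrier G"
  shows "finite (word_ball G S k)"
proof -
  have "word_ball G S k \<subseteq> (\<lambda>ws. foldr (\<otimes>) ws \<one>) ` {ws. set ws \<subseteq> S \<and> length ws \<le> k}"
  proof
    fix g assume g: "g \<in> word_ball G S k"
    then have "g \<in> carrier G" and le: "word_length G S g \<le> k"
      by (auto simp: word_ball_def word_dist_one)
    then obtain ws where "length ws = word_length G S g" "set ws \<subseteq> S" "foldr (\<otimes>) ws \<one> = g"
      using word_length_attained[OF generate_imp_word[OF assms(2,3)]] assms(4) by blast
    then show "g \<in> (\<lambda>ws. foldr (\<otimes>) ws \<one>) ` {ws. set ws \<subseteq> S \<and> length ws \<le> k}"
      using le by auto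
  qed
  moreover have "finite {ws. set ws \<subseteq> S \<and> length ws \<le> k}"
    using finite_lists_length_le[OF assms(1)] by simp
  ultimately show ?thesis by (meson finite_imageI finite_subset)
qed

lemma coset_rep_mem:
  assumes "\<forall>g \<in> carrier G. \<exists>!f. f \<in> F \<and> g \<in> f <#\<^bsub>G\<^esub> H" "g \<in> carrier G"
  shows "coset_rep G H F g \<in> F" "g \<in> coset_rep G H F g <#\<^bsub>G\<^esub> H"
  using theI'[of "\<lambda>f. f \<in> F \<and> g \<in> f <#\<^bsub>G\<^esub> H"] assms unfolding coset_rep_def by auto

lemma (in group) coset_rep_mult_proj:
  assumes "subgroup H G" "F \<subseteq> carrier G"
    and "\<forall>g \<in> carrier G. \<exists>!f. f \<in> F \<and> g \<in> f <# H" "g \<in> carrier G"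
  shows "coset_proj G H F g \<in> H" "g = coset_rep G H F g \<otimes> coset_proj G H F g"
proof -
  let ?f = "coset_rep G H F g"
  have f: "?f \<in> carrier G" using coset_rep_mem(1)[OF assms(3,4)] assms(2) by blast
  obtain h where h: "h \<in> H" "g = ?f \<otimes> h"
    using coset_rep_mem(2)[OF assms(3,4)] by (auto simp: l_coset_def)
  have "h \<in> carrier G" using h(1) subgroup.subset[OF assms(1)] by blast
  have "coset_proj G H F g = inv ?f \<otimes> (?f \<otimes> h)"
    unfolding coset_proj_def using arg_cong[OF h(2), of "\<lambda>x. inv ?f \<otimes> x"] .
  also have "\<dots> = h" using f \<open>h \<in> carrier G\<close> by (simp add: m_assoc[symmetric])
  finally have "coset_proj G H F g = h" .
  then show "coset_proj G H F g \<in> H" "g = ?f \<otimes> coset_proj G H F g" using h by auto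
qed

lemma (in group) height_le_word_dist:
  "subgroup H G \<Longrightarrow> g \<in> carrier G \<Longrightarrow> height G H D g \<le> word_dist G D \<one> g"
  unfolding height_def by (rule Least_le) (use lcos_self in blast)

lemma (in group) height_eq_word_dist_coset_rep:
  assumes "subgroup H G" "F \<subseteq> carrier G"
    and F_rep: "\<forall>g \<in> carrier G. \<exists>!f. f \<in> F \<and> g \<in> f <# H"
    and F_min: "\<forall>f \<in> F. \<forall>g \<in> f <# H. word_dist G D \<one> f \<le> word_dist G D \<one> g"
    and "g \<in> carrier G"
  shows "height G H D g = word_dist G D \<one> (coset_rep G H F g)"
proof -
  let ?f = "coset_rep G H F g"
  have "?f \<in> F" and g: "g \<in> ?f <# H" using coset_rep_mem[OF F_rep assms(5)] by auto
  then have f: "?f \<in> carrier G" using assms(2) by blast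
  have same_coset: "g <# H = ?f <# H" using l_repr_independence[OF g f assms(1)] by simp
  then have "?f \<in> g <# H" using lcos_self[OF f assms(1)] by simp
  then have le: "height G H D g \<le> word_dist G D \<one> ?f"
    unfolding height_def by (intro Least_le) blast
  obtain x where "x \<in> g <# H" "word_dist G D \<one> x = height G H D g"
    using LeastI_ex[of "\<lambda>n. \<exists>x \<in> g <# H. word_dist G D \<one> x = n"] \<open>?f \<in> g <# H\<close>
    unfolding height_def by blast
  then have "word_dist G D \<one> ?f \<le> height G H D g"
    using F_min \<open>?f \<in> F\<close> same_coset by metis
  with le show ?thesis by simp
qed

lemma (in group) rectangle_subset_word_ball:
  assumes sub: "subgroup H G"
    and D_sub: "D \<subseteq> carrier G" and D_inv: "\<forall>x \<in> D. inv x \<in> D"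
    and D_gen: "generate G D = carrier G"
    and E_inv: "\<forall>x \<in> E. inv x \<in> E" and E_gen: "generate G E = H" and E_D: "E \<subseteq> D"
    and F_sub: "F \<subseteq> carrier G"
    and F_rep: "\<forall>g \<in> carrier G. \<exists>!f. f \<in> F \<and> g \<in> f <# H"
    and F_min: "\<forall>f \<in> F. \<forall>g \<in> f <# H. word_dist G D \<one> f \<le> word_dist G D \<one> g"
  shows "rectangle G H F D E k l \<subseteq> word_ball G D (k + l)"
proof
  fix g assume "g \<in> rectangle G H F D E k l"
  then have g: "g \<in> carrier G" and "height G H D g \<le> k" "normH G H F E g \<le> l"
    by (auto simp: rectangle_def)
  define f where "f = coset_rep G H F g"
  define h where "h = coset_proj G H F g"
  have f: "f \<in> carrier G" using coset_rep_mem(1)[OF F_rep g] F_sub f_def by blast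
  have h: "h \<in> H" and g_eq: "g = f \<otimes> h"
    using coset_rep_mult_proj[OF sub F_sub F_rep g] by (auto simp: f_def h_def)
  have hc: "h \<in> carrier G" using h subgroup.subset[OF sub] by blast
  have "word_length G D f \<le> k"
    using height_eq_word_dist_coset_rep[OF sub F_sub F_rep F_min g] \<open>height G H D g \<le> k\<close>
      word_dist_one[OF f] by (simp add: f_def)
  moreover have "word_length G D h \<le> l"
  proof -
    have "E \<subseteq> carrier G" using E_D D_sub by blast
    then have "word_length G D h \<le> word_length G E h"
      using word_length_antimono[OF E_D _ E_inv] h E_gen by blast
    also have "\<dots> = normH G H F E g" using hc by (simp add: normH_def h_def word_dist_one)
    finally show ?thesis using \<open>normH G H F E g \<le> l\<close> by simp
  qed
  moreover have "word_length G D g \<le> word_length G D f + word_length G D h"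
    using word_length_mult_le[OF D_sub D_inv] f hc D_gen g_eq by simp
  ultimately show "g \<in> word_ball G D (k + l)"
    using g by (simp add: word_ball_def word_dist_one)
qed

lemma (in group) word_ball_subset_rectangle_Lambda:
  assumes "subgroup H G" "finite D" "D \<subseteq> carrier G" "\<forall>x \<in> D. inv x \<in> D"
    and "generate G D = carrier G"
  shows "word_ball G D k \<subseteq> rectangle G H F D E k (Lambda G H F D E k)"
proof
  fix g assume g: "g \<in> word_ball G D k"
  then have "g \<in> carrier G" by (simp add: word_ball_def)
  moreover have "height G H D g \<le> k"
    using height_le_word_dist[OF assms(1) \<open>g \<in> carrier G\<close>, of D] g by (simp add: word_ball_def)
  moreover have "normH G H F E g \<le> Lambda G H F D E k"
    unfolding Lambda_def using g finite_word_ball[OF assms(2-5)] by (intro Max_ge) auto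
  ultimately show "g \<in> rectangle G H F D E k (Lambda G H F D E k)"
    by (simp add: rectangle_def)
qed

theorem proposition4:
  fixes G (structure) and H D E F :: "'a set"
  assumes grp: "group G"
    and sub: "subgroup H G"
    and D_fin: "finite D" and D_sub: "D \<subseteq> carrier G"
    and D_inv: "\<forall>x \<in> D. inv x \<in> D" and D_gen: "generate G D = carrier G"
    and E_fin: "finite E" and E_sub: "E \<subseteq> H"
    and E_inv: "\<forall>x \<in> E. inv x \<in> E" and E_gen: "generate G E = H"
    and E_D: "E \<subseteq> D"
    and F_sub: "F \<subseteq> carrier G"
    and F_rep: "\<forall>g \<in> carrier G. \<exists>!f. f \<in> F \<and> g \<in> f <# H"
    and F_one: "\<one> \<in> F"
    and F_min: "\<forall>f \<in> F. \<forall>g \<in> f <# H. word_dist G D \<one> f \<le> word_dist G D \<one> g"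
  shows "(\<forall>k l. rectangle G H F D E k l \<subseteq> word_ball G D (k + l))
       \<and> (\<forall>k. word_ball G D k \<subseteq> rectangle G H F D E k (Lambda G H F D E k))"
  using group.rectangle_subset_word_ball[OF grp sub D_sub D_inv D_gen E_inv E_gen E_D F_sub F_rep F_min]
    group.word_ball_subset_rectangle_Lambda[OF grp sub D_fin D_sub D_inv D_gen]
  by blast

end
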